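(* Let $\Omega\subset\mathbb{C}$ be a simply connected domain and let $(g,\mathcal{P},\mathcal{Q})$ be a Weierstrass data of the first kind on $\Omega$. Then there exists a map $\mathbf{X}=(\mathbf{x}_1,\mathbf{x}_2,\mathbf{x}_3,\mathbf{x}_4):\Omega\to\mathbb{L}^4$ (unique up to an additive constant vector) with $$\mathbf{X}_z=\mathcal{P}_z\begin{bmatrix}1/g\\ i/g\\ 1\\ 1\end{bmatrix}+\mathcal{Q}_z\begin{bmatrix}g\\ -ig\\ -1\\ 1\end{bmatrix},$$ and it satisfies: (i) $\mathbf{X}_{z\overline z}=\mathcal{Q}_{z\overline z}\,\mathcal{G}$, where $\mathcal{G}:=\big(2\,\mathrm{Re}\,g,\;2\,\mathrm{Im}\,g,\;-1+|g|^2,\;1+|g|^2\big)^T$; (ii) up to additive constants, $\mathbf{x}_3=\mathcal{P}-\mathcal{Q}$ and $\mathbf{x}_4=\mathcal{P}+\mathcal{Q}$; (iii) $\langle\mathcal{G},\mathcal{G}\rangle=0$ and $\langle\mathbf{X}_z,\mathcal{G}\rangle=0$; (iv) $\mathbf{X}$ is a conformal spacelike immersion whose induced metric is $$ds^2=\frac{4}{|g|^2}\left|\mathcal{P}_z-|g|^2\mathcal{Q}_z\right|^2|dz|^2;$$ (v) the surface $\mathbf{X}(\Omega)$ is marginally trapped, i.e. its mean curvature vector $\mathbf{H}$ satisfies $\langle\mathbf{H},\mathbf{H}\rangle=0$.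
   Context: $\Omega\subset\mathbb{R}^2\equiv\mathbb{C}$ has complex coordinate $z=u+iv$, and $\partial_z=\frac12(\partial_u-i\partial_v)$, $\partial_{\overline z}=\frac12(\partial_u+i\partial_v)$; subscripts denote partial derivatives. $\mathbb{L}^4$ is $\mathbb{R}^4$ with the Lorentzian metric $\langle x,y\rangle=x_1y_1+x_2y_2+x_3y_3-x_4y_4$; this form is extended complex-bilinearly to $\mathbb{C}^4$. A map $\mathbf{X}:\Omega\to\mathbb{L}^4$ is a conformal spacelike immersion with metric $\Lambda|dz|^2=\Lambda(du^2+dv^2)$, $\Lambda>0$, iff $\langle\mathbf{X}_z,\mathbf{X}_z\rangle=0$ and $\Lambda=2\langle\mathbf{X}_z,\overline{\mathbf{X}_z}\rangle>0$. Its mean curvature vector is $\mathbf{H}=\Delta_{ds^2}\mathbf{X}=\frac{4}{\Lambda}\mathbf{X}_{z\overline z}$. A spacelike surface is marginally trapped if $\langle\mathbf{H},\mathbf{H}\rangle=0$. A Weierstrass data of the first kind on $\Omega$ is a triple $(g,\mathcal{P},\mathcal{Q})$ where $g:\Omega\to\mathbb{C}\setminus\{0\}$ and $\mathcal{P},\mathcal{Q}:\Omega\to\mathbb{R}$ are $\mathcal{C}^2$, satisfying $g_{\overline z}=0$, $\mathcal{P}_{z\overline z}=|g|^2\mathcal{Q}_{z\overline z}$, and $\mathcal{P}_z-|g|^2\mathcal{Q}_z\neq0$ at every point of $\Omega$. *)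

theory Defs
  imports "HOL-Analysis.Analysis"
begin

definition pu :: "(complex \<Rightarrow> 'a::real_normed_vector) \<Rightarrow> complex \<Rightarrow> 'a" where
  "pu f z = vector_derivative (\<lambda>t::real. f (z + complex_of_real t)) (at 0)"

definition pv :: "(complex \<Rightarrow> 'a::real_normed_vector) \<Rightarrow> complex \<Rightarrow> 'a" where
  "pv f z = vector_derivative (\<lambda>t::real. f (z + \<i> * complex_of_real t)) (at 0)"

definition C1_on :: "complex set \<Rightarrow> (complex \<Rightarrow> 'a::real_normed_vector) \<Rightarrow> bool" where
  "C1_on S f \<longleftrightarrow> (\<forall>z\<in>S. f differentiable (at z)) \<and>
      continuous_on S (pu f) \<and> continuous_on S (pv f)"

definition C2_on :: "complex set \<Rightarrow> (complex \<Rightarrow> 'a::real_normed_vector) \<Rightarrow> bool" where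
  "C2_on S f \<longleftrightarrow> C1_on S f \<and> C1_on S (pu f) \<and> C1_on S (pv f)"

definition Dz :: "(complex \<Rightarrow> complex) \<Rightarrow> complex \<Rightarrow> complex" where
  "Dz f z = (pu f z - \<i> * pv f z) / 2"

definition Dzb :: "(complex \<Rightarrow> complex) \<Rightarrow> complex \<Rightarrow> complex" where
  "Dzb f z = (pu f z + \<i> * pv f z) / 2"

definition DzV :: "(complex \<Rightarrow> complex ^ 4) \<Rightarrow> complex \<Rightarrow> complex ^ 4" where
  "DzV F z = (1/2) *s (pu F z - \<i> *s pv F z)"

definition DzbV :: "(complex \<Rightarrow> complex ^ 4) \<Rightarrow> complex \<Rightarrow> complex ^ 4" where
  "DzbV F z = (1/2) *s (pu F z + \<i> *s pv F z)"

definition cvec :: "real ^ 4 \<Rightarrow> complex ^ 4" where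
  "cvec x = (\<chi> i. complex_of_real (x $ i))"

definition cfun :: "(complex \<Rightarrow> real) \<Rightarrow> complex \<Rightarrow> complex" where
  "cfun f = (\<lambda>z. complex_of_real (f z))"

text \<open>Lorentzian form on L^4, extended complex-bilinearly to C^4.\<close>
definition lor :: "complex ^ 4 \<Rightarrow> complex ^ 4 \<Rightarrow> complex" where
  "lor x y = x$1 * y$1 + x$2 * y$2 + x$3 * y$3 - x$4 * y$4"

definition cconj :: "complex ^ 4 \<Rightarrow> complex ^ 4" where
  "cconj x = (\<chi> i. cnj (x $ i))"

text \<open>Metric coefficient Lambda = 2 <X_z, conj X_z> and mean curvature vector H = (4/Lambda) X_{z zbar}.\<close>
definition Lam :: "(complex \<Rightarrow> real ^ 4) \<Rightarrow> complex \<Rightarrow> complex" where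
  "Lam X z = 2 * lor (DzV (\<lambda>w. cvec (X w)) z) (cconj (DzV (\<lambda>w. cvec (X w)) z))"

definition conformal_spacelike_immersion :: "complex set \<Rightarrow> (complex \<Rightarrow> real ^ 4) \<Rightarrow> bool" where
  "conformal_spacelike_immersion S X \<longleftrightarrow>
     (\<forall>z\<in>S. X differentiable (at z) \<and>
        lor (DzV (\<lambda>w. cvec (X w)) z) (DzV (\<lambda>w. cvec (X w)) z) = 0 \<and>
        Im (Lam X z) = 0 \<and> Re (Lam X z) > 0)"

definition meanH :: "(complex \<Rightarrow> real ^ 4) \<Rightarrow> complex \<Rightarrow> complex ^ 4" where
  "meanH X z = (4 / Lam X z) *s DzbV (DzV (\<lambda>w. cvec (X w))) z"

definition marginally_trapped :: "complex set \<Rightarrow> (complex \<Rightarrow> real ^ 4) \<Rightarrow> bool" where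
  "marginally_trapped S X \<longleftrightarrow> (\<forall>z\<in>S. lor (meanH X z) (meanH X z) = 0)"

definition weierstrass_first_kind ::
  "complex set \<Rightarrow> (complex \<Rightarrow> complex) \<Rightarrow> (complex \<Rightarrow> real) \<Rightarrow> (complex \<Rightarrow> real) \<Rightarrow> bool" where
  "weierstrass_first_kind S g P Q \<longleftrightarrow>
     g holomorphic_on S \<and> (\<forall>z\<in>S. g z \<noteq> 0) \<and> C2_on S P \<and> C2_on S Q \<and>
     (\<forall>z\<in>S. Dzb (Dz (cfun P)) z = complex_of_real ((cmod (g z))\<^sup>2) * Dzb (Dz (cfun Q)) z) \<and>
     (\<forall>z\<in>S. Dz (cfun P) z - complex_of_real ((cmod (g z))\<^sup>2) * Dz (cfun Q) z \<noteq> 0)"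

definition Pvec :: "complex \<Rightarrow> complex ^ 4" where
  "Pvec g = vector [1 / g, \<i> / g, 1, 1]"

definition Qvec :: "complex \<Rightarrow> complex ^ 4" where
  "Qvec g = vector [g, - \<i> * g, -1, 1]"

definition Gvec :: "complex \<Rightarrow> complex ^ 4" where
  "Gvec g = vector [complex_of_real (2 * Re g), complex_of_real (2 * Im g),
                    complex_of_real (-1 + (cmod g)\<^sup>2), complex_of_real (1 + (cmod g)\<^sup>2)]"

end

(*
  Each coordinate x_k of X is a real primitive of the 1-form Re (2 (X_z)_k dz).  A form
  Re (phi dz) is closed exactly when phi_zbar is real, and here
    (X_z)_zbar = P_{z zbar} Pvec + Q_{z zbar} Qvec = Q_{z zbar} (|g|^2 Pvec + Qvec) = Q_{z zbar} G
  is real: P_{z zbar} = |g|^2 Q_{z zbar} by hypothesis, Q_{z zbar} is a quarter of the Laplacian of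
  Q by the symmetry of mixed partials, and G has real entries.  On a horizontal strip a closed form
  is exact (integrate along two sides of a rectangle and differentiate under the integral sign);
  pulling back by a holomorphic map k replaces phi by (phi o k) k', which multiplies phi_zbar by
  |k'|^2, so the Riemann mapping theorem and the Cayley transform carry exactness to every simply
  connected domain.  The remaining claims are algebra in L^4: Pvec and Qvec are null and mutually
  orthogonal, so X_z is null; G = |g|^2 Pvec + Qvec is null and orthogonal to X_z; and the mean
  curvature vector (4 / Lambda) Q_{z zbar} G is a multiple of G.
*)

theory Submission
  imports Defs "HOL-Complex_Analysis.Complex_Analysis"
begin

section \<open>Partial and Wirtinger derivatives\<close>

lemma has_vector_derivative_horizontal:
  assumes "(f has_derivative Df) (at (c + complex_of_real s))"
  shows "((\<lambda>s. f (c + complex_of_real s)) has_vector_derivative Df 1) (at s)"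
proof -
  have "((\<lambda>s::real. c + complex_of_real s) has_derivative complex_of_real) (at s)"
    by (auto intro!: derivative_eq_intros)
  from has_derivative_compose[OF this assms]
  have "((\<lambda>s. f (c + complex_of_real s)) has_derivative (\<lambda>t. Df (complex_of_real t))) (at s)" .
  moreover have "Df (complex_of_real t) = t *\<^sub>R Df 1" for t
    using linear_scale[OF has_derivative_linear[OF assms], of t 1] by (simp add: scaleR_conv_of_real)
  ultimately show ?thesis by (simp add: has_vector_derivative_def)
qed

lemma has_vector_derivative_vertical:
  assumes "(f has_derivative Df) (at (c + \<i> * complex_of_real s))"
  shows "((\<lambda>s. f (c + \<i> * complex_of_real s)) has_vector_derivative Df \<i>) (at s)"
proof -
  have "((\<lambda>s::real. c + \<i> * complex_of_real s) has_derivative (\<lambda>t. \<i> * complex_of_real t)) (at s)"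
    by (auto intro!: derivative_eq_intros)
  from has_derivative_compose[OF this assms]
  have "((\<lambda>s. f (c + \<i> * complex_of_real s)) has_derivative (\<lambda>t. Df (\<i> * complex_of_real t))) (at s)" .
  moreover have "Df (\<i> * complex_of_real t) = t *\<^sub>R Df \<i>" for t
    using linear_scale[OF has_derivative_linear[OF assms], of t \<i>]
    by (simp add: scaleR_conv_of_real ac_simps)
  ultimately show ?thesis by (simp add: has_vector_derivative_def)
qed

lemma has_real_derivative_horizontal:
  fixes f :: "complex \<Rightarrow> real"
  assumes "(f has_derivative Df) (at (c + complex_of_real s))"
  shows "((\<lambda>s. f (c + complex_of_real s)) has_real_derivative Df 1) (at s)"
  using has_vector_derivative_horizontal[OF assms]
  by (simp add: has_real_derivative_iff_has_vector_derivative)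

lemma has_real_derivative_vertical:
  fixes f :: "complex \<Rightarrow> real"
  assumes "(f has_derivative Df) (at (c + \<i> * complex_of_real s))"
  shows "((\<lambda>s. f (c + \<i> * complex_of_real s)) has_real_derivative Df \<i>) (at s)"
  using has_vector_derivative_vertical[OF assms]
  by (simp add: has_real_derivative_iff_has_vector_derivative)

lemma pu_eq_derivative:
  assumes "(f has_derivative Df) (at z)"
  shows "pu f z = Df 1"
proof -
  have "((\<lambda>t. f (z + complex_of_real t)) has_vector_derivative Df 1) (at 0)"
    using has_vector_derivative_horizontal[of f Df z 0] assms by simp
  then show ?thesis unfolding pu_def by (rule vector_derivative_at)
qed

lemma pv_eq_derivative:
  assumes "(f has_derivative Df) (at z)"
  shows "pv f z = Df \<i>"
proof -
  have "((\<lambda>t. f (z + \<i> * complex_of_real t)) has_vector_derivative Df \<i>) (at 0)"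
    using has_vector_derivative_vertical[of f Df z 0] assms by simp
  then show ?thesis unfolding pv_def by (rule vector_derivative_at)
qed

lemma linear_complex_decompose:
  assumes "linear Df"
  shows "Df h = Re h *\<^sub>R Df 1 + Im h *\<^sub>R Df \<i>"
proof -
  have "h = Re h *\<^sub>R 1 + Im h *\<^sub>R \<i>" by (simp add: complex_eq_iff)
  then have "Df h = Df (Re h *\<^sub>R 1 + Im h *\<^sub>R \<i>)" by (rule arg_cong)
  also have "\<dots> = Re h *\<^sub>R Df 1 + Im h *\<^sub>R Df \<i>"
    by (simp only: linear_add[OF assms] linear_scale[OF assms])
  finally show ?thesis .
qed

lemma has_derivative_partials:
  assumes "(f has_derivative Df) (at z)"
  shows "Df = (\<lambda>h. Re h *\<^sub>R pu f z + Im h *\<^sub>R pv f z)"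
  unfolding pu_eq_derivative[OF assms] pv_eq_derivative[OF assms]
  using linear_complex_decompose[OF has_derivative_linear[OF assms]] by (rule ext)

lemma C1_on_has_derivative:
  assumes "C1_on S f" "z \<in> S"
  shows "(f has_derivative (\<lambda>h. Re h *\<^sub>R pu f z + Im h *\<^sub>R pv f z)) (at z)"
proof -
  obtain Df where "(f has_derivative Df) (at z)"
    using assms unfolding C1_on_def differentiable_def by blast
  with has_derivative_partials[OF this] show ?thesis by simp
qed

lemma pu_cong:
  assumes "open S" "z \<in> S" "\<And>w. w \<in> S \<Longrightarrow> f w = h w"
  shows "pu f z = pu h z"
proof -
  obtain e where "e > 0" "ball z e \<subseteq> S" using assms(1,2) openE by blast
  then have "eventually (\<lambda>t::real. z + complex_of_real t \<in> S) (nhds 0)"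
    unfolding eventually_nhds_metric by (intro exI[of _ e]) (auto simp: dist_norm)
  then have "eventually (\<lambda>t. t \<in> UNIV \<longrightarrow> f (z + complex_of_real t) = h (z + complex_of_real t)) (nhds 0)"
    by (rule eventually_mono) (simp add: assms(3))
  then show ?thesis
    unfolding pu_def by (rule vector_derivative_cong_eq) auto
qed

lemma pv_cong:
  assumes "open S" "z \<in> S" "\<And>w. w \<in> S \<Longrightarrow> f w = h w"
  shows "pv f z = pv h z"
proof -
  obtain e where "e > 0" "ball z e \<subseteq> S" using assms(1,2) openE by blast
  then have "eventually (\<lambda>t::real. z + \<i> * complex_of_real t \<in> S) (nhds 0)"
    unfolding eventually_nhds_metric by (intro exI[of _ e]) (auto simp: dist_norm norm_mult)
  then have "eventually (\<lambda>t. t \<in> UNIV \<longrightarrow>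
      f (z + \<i> * complex_of_real t) = h (z + \<i> * complex_of_real t)) (nhds 0)"
    by (rule eventually_mono) (simp add: assms(3))
  then show ?thesis
    unfolding pv_def by (rule vector_derivative_cong_eq) auto
qed

lemma Dz_eq_derivative:
  assumes "(f has_derivative Df) (at z)"
  shows "Dz f z = (Df 1 - \<i> * Df \<i>) / 2"
  unfolding Dz_def pu_eq_derivative[OF assms] pv_eq_derivative[OF assms] ..

lemma Dzb_eq_derivative:
  assumes "(f has_derivative Df) (at z)"
  shows "Dzb f z = (Df 1 + \<i> * Df \<i>) / 2"
  unfolding Dzb_def pu_eq_derivative[OF assms] pv_eq_derivative[OF assms] ..

lemma has_derivative_Wirtinger:
  assumes "(f has_derivative Df) (at z)"
  shows "Df = (\<lambda>h. Dz f z * h + Dzb f z * cnj h)"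
proof
  fix h
  have "Df h = Re h *\<^sub>R Df 1 + Im h *\<^sub>R Df \<i>"
    by (rule linear_complex_decompose[OF has_derivative_linear[OF assms]])
  then show "Df h = Dz f z * h + Dzb f z * cnj h"
    unfolding Dz_eq_derivative[OF assms] Dzb_eq_derivative[OF assms]
    by (simp add: scaleR_conv_of_real complex_eq_iff field_simps)
qed

lemma Wirtinger_eqI:
  assumes "(f has_derivative (\<lambda>h. a * h + b * cnj h)) (at z)"
  shows "Dz f z = a" "Dzb f z = b"
  using Dz_eq_derivative[OF assms] Dzb_eq_derivative[OF assms] by (simp_all add: algebra_simps)

lemma Dzb_add:
  assumes "f differentiable (at z)" "h differentiable (at z)"
  shows "Dzb (\<lambda>w. f w + h w) z = Dzb f z + Dzb h z"
proof -
  obtain Df Dh where f: "(f has_derivative Df) (at z)" and h: "(h has_derivative Dh) (at z)"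
    using assms unfolding differentiable_def by blast
  show ?thesis
    unfolding Dzb_eq_derivative[OF has_derivative_add[OF f h]] Dzb_eq_derivative[OF f]
      Dzb_eq_derivative[OF h]
    by (simp add: algebra_simps add_divide_distrib)
qed

lemma Dzb_mult_holomorphic:
  assumes "f differentiable (at z)" "(h has_field_derivative h') (at z)"
  shows "Dzb (\<lambda>w. f w * h w) z = Dzb f z * h z"
proof -
  obtain Df where f: "(f has_derivative Df) (at z)"
    using assms(1) unfolding differentiable_def by blast
  have h: "(h has_derivative (\<lambda>v. h' * v)) (at z)"
    using assms(2) unfolding has_field_derivative_def .
  show ?thesis
    unfolding Dzb_eq_derivative[OF has_derivative_mult[OF f h]] Dzb_eq_derivative[OF f]
    by (simp add: algebra_simps add_divide_distrib)
qed

lemma Dzb_compose_holomorphic: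
  assumes "\<phi> differentiable (at (k z))" "(k has_field_derivative k') (at z)"
  shows "Dzb (\<lambda>w. \<phi> (k w)) z = Dzb \<phi> (k z) * cnj k'"
proof -
  obtain D\<phi> where \<phi>: "(\<phi> has_derivative D\<phi>) (at (k z))"
    using assms(1) unfolding differentiable_def by blast
  have "(k has_derivative (\<lambda>h. k' * h)) (at z)"
    using assms(2) unfolding has_field_derivative_def .
  from has_derivative_compose[OF this \<phi>]
  have "((\<lambda>w. \<phi> (k w)) has_derivative
      (\<lambda>h. (Dz \<phi> (k z) * k') * h + (Dzb \<phi> (k z) * cnj k') * cnj h)) (at z)"
    unfolding has_derivative_Wirtinger[OF \<phi>] by (simp add: ac_simps)
  then show ?thesis by (rule Wirtinger_eqI)
qed

lemma has_derivative_cfun: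
  assumes "(f has_derivative Df) (at z)"
  shows "(cfun f has_derivative (\<lambda>h. complex_of_real (Df h))) (at z)"
  unfolding cfun_def using assms by (rule has_derivative_of_real)

lemma Dz_cfun:
  assumes "f differentiable (at z)"
  shows "Dz (cfun f) z = (complex_of_real (pu f z) - \<i> * complex_of_real (pv f z)) / 2"
proof -
  obtain Df where f: "(f has_derivative Df) (at z)"
    using assms unfolding differentiable_def by blast
  show ?thesis
    unfolding Dz_eq_derivative[OF has_derivative_cfun[OF f]] pu_eq_derivative[OF f]
      pv_eq_derivative[OF f] ..
qed

lemma has_derivative_Dz_cfun:
  assumes "f differentiable (at z)"
  shows "(f has_derivative (\<lambda>h. Re (2 * Dz (cfun f) z * h))) (at z)"
proof -
  obtain Df where f: "(f has_derivative Df) (at z)"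
    using assms unfolding differentiable_def by blast
  moreover have "Df = (\<lambda>h. Re (2 * Dz (cfun f) z * h))"
    unfolding Dz_cfun[OF assms] has_derivative_partials[OF f] by (simp add: fun_eq_iff)
  ultimately show ?thesis by simp
qed

lemma C1_on_imp_continuous_on: "C1_on S f \<Longrightarrow> continuous_on S f"
  unfolding C1_on_def by (meson differentiable_imp_continuous_within continuous_at_imp_continuous_on)

lemma C1_on_add:
  assumes f: "C1_on S f" and h: "C1_on S h"
  shows "C1_on S (\<lambda>w. f w + h w)"
proof -
  have "pu (\<lambda>w. f w + h w) w = pu f w + pu h w \<and> pv (\<lambda>w. f w + h w) w = pv f w + pv h w"
    if "w \<in> S" for w
    using has_derivative_add[OF C1_on_has_derivative[OF f that] C1_on_has_derivative[OF h that]]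
    by (simp add: pu_eq_derivative pv_eq_derivative)
  with assms show ?thesis
    unfolding C1_on_def
    by (auto intro!: continuous_intros intro: continuous_on_eq)
qed

lemma C1_on_mult:
  fixes f h :: "complex \<Rightarrow> 'a::real_normed_algebra"
  assumes f: "C1_on S f" and h: "C1_on S h"
  shows "C1_on S (\<lambda>w. f w * h w)"
proof -
  have "pu (\<lambda>w. f w * h w) w = f w * pu h w + pu f w * h w \<and>
        pv (\<lambda>w. f w * h w) w = f w * pv h w + pv f w * h w" if "w \<in> S" for w
    using has_derivative_mult[OF C1_on_has_derivative[OF f that] C1_on_has_derivative[OF h that]]
    by (simp add: pu_eq_derivative pv_eq_derivative)
  with assms C1_on_imp_continuous_on[OF f] C1_on_imp_continuous_on[OF h] show ?thesis
    unfolding C1_on_def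
    by (auto intro!: continuous_intros intro: continuous_on_eq)
qed

lemma holomorphic_on_imp_C1_on:
  assumes "open S" "h holomorphic_on S"
  shows "C1_on S h"
proof -
  have d: "(h has_derivative (\<lambda>v. deriv h w * v)) (at w)" if "w \<in> S" for w
    using holomorphic_derivI[OF assms(2,1) that] unfolding has_field_derivative_def .
  have "h differentiable (at w) \<and> pu h w = deriv h w \<and> pv h w = deriv h w * \<i>"
    if "w \<in> S" for w
    using d[OF that] pu_eq_derivative[OF d[OF that]] pv_eq_derivative[OF d[OF that]]
    by (auto simp: differentiable_def)
  moreover have "continuous_on S (deriv h)"
    by (rule holomorphic_on_imp_continuous_on[OF holomorphic_deriv[OF assms(2,1)]])
  ultimately show ?thesis
    unfolding C1_on_def by (auto intro!: continuous_intros intro: continuous_on_eq)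
qed

lemma C1_on_compose_holomorphic:
  assumes \<phi>: "C1_on S \<phi>" and T: "open T" "k holomorphic_on T" "k ` T \<subseteq> S"
  shows "C1_on T (\<lambda>w. \<phi> (k w))"
proof -
  have "pu (\<lambda>w. \<phi> (k w)) w = Re (deriv k w) *\<^sub>R pu \<phi> (k w) + Im (deriv k w) *\<^sub>R pv \<phi> (k w) \<and>
        pv (\<lambda>w. \<phi> (k w)) w = Re (deriv k w * \<i>) *\<^sub>R pu \<phi> (k w) + Im (deriv k w * \<i>) *\<^sub>R pv \<phi> (k w) \<and>
        (\<lambda>w. \<phi> (k w)) differentiable (at w)" if w: "w \<in> T" for w
  proof -
    have "(k has_derivative (\<lambda>v. deriv k w * v)) (at w)"
      using holomorphic_derivI[OF T(2,1) w] unfolding has_field_derivative_def .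
    from has_derivative_compose[OF this C1_on_has_derivative[OF \<phi>]] w T(3)
    have "((\<lambda>w. \<phi> (k w)) has_derivative (\<lambda>v. Re (deriv k w * v) *\<^sub>R pu \<phi> (k w)
        + Im (deriv k w * v) *\<^sub>R pv \<phi> (k w))) (at w)"
      by auto
    then show ?thesis
      using pu_eq_derivative pv_eq_derivative unfolding differentiable_def by fastforce
  qed
  moreover have "continuous_on T (\<lambda>w. pu \<phi> (k w))" "continuous_on T (\<lambda>w. pv \<phi> (k w))"
    using \<phi> T by (auto simp: C1_on_def intro!: continuous_on_compose2[of S _ T k]
        holomorphic_on_imp_continuous_on)
  moreover have "continuous_on T (deriv k)"
    by (rule holomorphic_on_imp_continuous_on[OF holomorphic_deriv[OF T(2,1)]])
  ultimately show ?thesis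
    unfolding C1_on_def by (auto intro!: continuous_intros intro: continuous_on_eq)
qed

section \<open>Second derivatives of real functions\<close>

lemma mixed_difference_mvt_pu:
  fixes f :: "complex \<Rightarrow> real"
  assumes f: "C1_on S f" and t: "t > 0"
    and rect: "\<And>a b. 0 \<le> a \<Longrightarrow> a \<le> t \<Longrightarrow> 0 \<le> b \<Longrightarrow> b \<le> t \<Longrightarrow>
      z + complex_of_real a + \<i> * complex_of_real b \<in> S"
  shows "\<exists>\<xi>. 0 < \<xi> \<and> \<xi> < t \<and>
    f (z + complex_of_real t + \<i> * complex_of_real t) - f (z + complex_of_real t)
      - f (z + \<i> * complex_of_real t) + f z
    = t * (pu f (z + complex_of_real \<xi> + \<i> * complex_of_real t) - pu f (z + complex_of_real \<xi>))"
proof -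
  define c where "c = z + \<i> * complex_of_real t"
  have pu: "((\<lambda>s. f (w + complex_of_real s)) has_real_derivative pu f (w + complex_of_real s)) (at s)"
    if "w + complex_of_real s \<in> S" for w s
    using has_real_derivative_horizontal[OF C1_on_has_derivative[OF f that]] by simp
  have "((\<lambda>s. f (c + complex_of_real s) - f (z + complex_of_real s)) has_real_derivative
      pu f (c + complex_of_real s) - pu f (z + complex_of_real s)) (at s)" if "0 \<le> s" "s \<le> t" for s
    using rect[of s t] rect[of s 0] that t by (intro DERIV_diff pu) (simp_all add: c_def ac_simps)
  from MVT2[OF t this] obtain \<xi> where "0 < \<xi>" "\<xi> < t"
    "(f (c + complex_of_real t) - f (z + complex_of_real t))
       - (f (c + complex_of_real 0) - f (z + complex_of_real 0))
      = (t - 0) * (pu f (c + complex_of_real \<xi>) - pu f (z + complex_of_real \<xi>))"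
    by blast
  then show ?thesis by (intro exI[of _ \<xi>]) (simp add: c_def ac_simps)
qed

lemma mixed_difference_mvt_pv:
  fixes f :: "complex \<Rightarrow> real"
  assumes f: "C1_on S f" and t: "t > 0"
    and rect: "\<And>a b. 0 \<le> a \<Longrightarrow> a \<le> t \<Longrightarrow> 0 \<le> b \<Longrightarrow> b \<le> t \<Longrightarrow>
      z + complex_of_real a + \<i> * complex_of_real b \<in> S"
  shows "\<exists>\<eta>. 0 < \<eta> \<and> \<eta> < t \<and>
    f (z + complex_of_real t + \<i> * complex_of_real t) - f (z + complex_of_real t)
      - f (z + \<i> * complex_of_real t) + f z
    = t * (pv f (z + complex_of_real t + \<i> * complex_of_real \<eta>) - pv f (z + \<i> * complex_of_real \<eta>))"
proof -
  define c where "c = z + complex_of_real t"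
  have pv: "((\<lambda>s. f (w + \<i> * complex_of_real s)) has_real_derivative pv f (w + \<i> * complex_of_real s))
    (at s)" if "w + \<i> * complex_of_real s \<in> S" for w s
    using has_real_derivative_vertical[OF C1_on_has_derivative[OF f that]] by simp
  have "((\<lambda>s. f (c + \<i> * complex_of_real s) - f (z + \<i> * complex_of_real s)) has_real_derivative
      pv f (c + \<i> * complex_of_real s) - pv f (z + \<i> * complex_of_real s)) (at s)"
    if "0 \<le> s" "s \<le> t" for s
    using rect[of t s] rect[of 0 s] that t by (intro DERIV_diff pv) (simp_all add: c_def)
  from MVT2[OF t this] obtain \<eta> where "0 < \<eta>" "\<eta> < t"
    "(f (c + \<i> * complex_of_real t) - f (z + \<i> * complex_of_real t))
       - (f (c + \<i> * complex_of_real 0) - f (z + \<i> * complex_of_real 0))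
      = (t - 0) * (pv f (c + \<i> * complex_of_real \<eta>) - pv f (z + \<i> * complex_of_real \<eta>))"
    by blast
  then show ?thesis by (intro exI[of _ \<eta>]) (simp add: c_def)
qed

lemma mixed_difference_symmetric:
  fixes f :: "complex \<Rightarrow> real"
  assumes f: "C1_on S f" and t: "t > 0"
    and rect: "\<And>a b. 0 \<le> a \<Longrightarrow> a \<le> t \<Longrightarrow> 0 \<le> b \<Longrightarrow> b \<le> t \<Longrightarrow>
      z + complex_of_real a + \<i> * complex_of_real b \<in> S"
  shows "\<exists>\<xi> \<eta>. 0 < \<xi> \<and> \<xi> < t \<and> 0 < \<eta> \<and> \<eta> < t \<and>
    pu f (z + complex_of_real \<xi> + \<i> * complex_of_real t) - pu f (z + complex_of_real \<xi>)
    = pv f (z + complex_of_real t + \<i> * complex_of_real \<eta>) - pv f (z + \<i> * complex_of_real \<eta>)"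
  using mixed_difference_mvt_pu[OF f t rect] mixed_difference_mvt_pv[OF f t rect] t by force

lemma norm_rectangle_le:
  assumes "0 \<le> a" "a \<le> t" "0 \<le> b" "b \<le> t"
  shows "norm (complex_of_real a + \<i> * complex_of_real b) \<le> 2 * t"
proof -
  have "norm (complex_of_real a + \<i> * complex_of_real b) \<le> \<bar>a\<bar> + \<bar>b\<bar>"
    by (metis norm_triangle_ineq norm_ii norm_mult norm_of_real mult_1)
  then show ?thesis using assms by auto
qed

lemma open_contains_small_square:
  assumes "open S" "z \<in> S" "d > 0"
  obtains t where "t > 0" "2 * t < d"
    "\<And>a b. 0 \<le> a \<Longrightarrow> a \<le> t \<Longrightarrow> 0 \<le> b \<Longrightarrow> b \<le> t \<Longrightarrow> z + complex_of_real a + \<i> * complex_of_real b \<in> S"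
proof -
  obtain r where r: "r > 0" "ball z r \<subseteq> S" using assms openE by blast
  define t where "t = min r d / 4"
  have t: "t > 0" "4 * t \<le> r" "4 * t \<le> d"
    using r assms by (auto simp: t_def)
  have "z + complex_of_real a + \<i> * complex_of_real b \<in> S"
    if "0 \<le> a" "a \<le> t" "0 \<le> b" "b \<le> t" for a b
  proof -
    have "z + (complex_of_real a + \<i> * complex_of_real b) \<in> ball z r"
      using norm_rectangle_le[OF that] t
        norm_minus_cancel[of "complex_of_real a + \<i> * complex_of_real b"]
      by (simp add: dist_norm)
    then show ?thesis using r(2) by (auto simp: add.assoc)
  qed
  with t that show ?thesis by force
qed

lemma has_derivative_approx:
  fixes f :: "complex \<Rightarrow> real"
  assumes "(f has_derivative (\<lambda>h. Re h *\<^sub>R a + Im h *\<^sub>R b)) (at z)" "e > 0"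
  obtains d where "d > 0"
    "\<And>h. norm h < d \<Longrightarrow> \<bar>f (z + h) - f z - (Re h * a + Im h * b)\<bar> \<le> e * norm h"
proof -
  obtain d where d: "d > 0" "\<And>y. norm (y - z) < d \<Longrightarrow>
      \<bar>f y - f z - (Re (y - z) * a + Im (y - z) * b)\<bar> \<le> e * norm (y - z)"
    using assms unfolding has_derivative_at_alt by force
  show ?thesis
  proof (rule that[OF d(1)])
    fix h :: complex
    assume "norm h < d"
    then show "\<bar>f (z + h) - f z - (Re h * a + Im h * b)\<bar> \<le> e * norm h"
      using d(2)[of "z + h"] by simp
  qed
qed

lemma mixed_partials_close:
  fixes f :: "complex \<Rightarrow> real"
  assumes S: "open S" "z \<in> S" and f: "C2_on S f" and e: "e > 0"
  shows "\<bar>pv (pu f) z - pu (pv f) z\<bar> \<le> 8 * e"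
proof -
  define f_uu f_uv f_vu f_vv where "f_uu = pu (pu f) z" and "f_uv = pv (pu f) z"
    and "f_vu = pu (pv f) z" and "f_vv = pv (pv f) z"
  have "(pu f has_derivative (\<lambda>h. Re h *\<^sub>R f_uu + Im h *\<^sub>R f_uv)) (at z)"
    using C1_on_has_derivative[of S "pu f"] f S(2) unfolding C2_on_def f_uu_def f_uv_def by blast
  then obtain d1 where d1: "d1 > 0"
    "\<And>h. norm h < d1 \<Longrightarrow> \<bar>pu f (z + h) - pu f z - (Re h * f_uu + Im h * f_uv)\<bar> \<le> e * norm h"
    using has_derivative_approx[OF _ e] by blast
  have "(pv f has_derivative (\<lambda>h. Re h *\<^sub>R f_vu + Im h *\<^sub>R f_vv)) (at z)"
    using C1_on_has_derivative[of S "pv f"] f S(2) unfolding C2_on_def f_vu_def f_vv_def by blast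
  then obtain d2 where d2: "d2 > 0"
    "\<And>h. norm h < d2 \<Longrightarrow> \<bar>pv f (z + h) - pv f z - (Re h * f_vu + Im h * f_vv)\<bar> \<le> e * norm h"
    using has_derivative_approx[OF _ e] by blast
  obtain t where t: "t > 0" "2 * t < min d1 d2" and square:
    "\<And>a b. 0 \<le> a \<Longrightarrow> a \<le> t \<Longrightarrow> 0 \<le> b \<Longrightarrow> b \<le> t \<Longrightarrow> z + complex_of_real a + \<i> * complex_of_real b \<in> S"
    using open_contains_small_square[OF S, of "min d1 d2"] d1(1) d2(1) by auto
  from mixed_difference_symmetric[OF _ t(1) square] f obtain \<xi> \<eta> where
    \<xi>\<eta>: "0 < \<xi>" "\<xi> < t" "0 < \<eta>" "\<eta> < t" and eq:
    "pu f (z + complex_of_real \<xi> + \<i> * complex_of_real t) - pu f (z + complex_of_real \<xi>)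
      = pv f (z + complex_of_real t + \<i> * complex_of_real \<eta>) - pv f (z + \<i> * complex_of_real \<eta>)"
    unfolding C2_on_def by blast
  define E where "E = e * (2 * t)"
  have approx:
    "\<bar>pu f (z + h) - pu f z - (Re h * f_uu + Im h * f_uv)\<bar> \<le> E"
    "\<bar>pv f (z + h) - pv f z - (Re h * f_vu + Im h * f_vv)\<bar> \<le> E" if "norm h \<le> 2 * t" for h
  proof -
    have "e * norm h \<le> E"
      unfolding E_def using that e by (intro mult_left_mono) auto
    moreover have "norm h < d1" "norm h < d2" using that t by auto
    ultimately show "\<bar>pu f (z + h) - pu f z - (Re h * f_uu + Im h * f_uv)\<bar> \<le> E"
      "\<bar>pv f (z + h) - pv f z - (Re h * f_vu + Im h * f_vv)\<bar> \<le> E"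
      using d1(2) d2(2) by (meson order_trans)+
  qed
  have "\<bar>pu f (z + complex_of_real \<xi> + \<i> * complex_of_real t) - pu f z - (\<xi> * f_uu + t * f_uv)\<bar> \<le> E"
    using approx(1)[OF norm_rectangle_le[of \<xi> t t]] \<xi>\<eta> t by (simp add: add.assoc)
  moreover have "\<bar>pu f (z + complex_of_real \<xi>) - pu f z - \<xi> * f_uu\<bar> \<le> E"
    using approx(1)[of "complex_of_real \<xi>"] \<xi>\<eta> by simp
  moreover have
    "\<bar>pv f (z + complex_of_real t + \<i> * complex_of_real \<eta>) - pv f z - (t * f_vu + \<eta> * f_vv)\<bar> \<le> E"
    using approx(2)[OF norm_rectangle_le[of t t \<eta>]] \<xi>\<eta> t by (simp add: add.assoc)
  moreover have "\<bar>pv f (z + \<i> * complex_of_real \<eta>) - pv f z - \<eta> * f_vv\<bar> \<le> E"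
    using approx(2)[of "\<i> * complex_of_real \<eta>"] \<xi>\<eta> by (simp add: norm_mult)
  moreover have "\<bar>t * (f_uv - f_vu)\<bar> \<le> 4 * E"
    if "\<bar>u1 - u - (\<xi> * f_uu + t * f_uv)\<bar> \<le> E" "\<bar>u0 - u - \<xi> * f_uu\<bar> \<le> E"
      "\<bar>v1 - v - (t * f_vu + \<eta> * f_vv)\<bar> \<le> E" "\<bar>v0 - v - \<eta> * f_vv\<bar> \<le> E" "u1 - u0 = v1 - v0"
    for u1 u0 u v1 v0 v :: real
    using that unfolding abs_le_iff right_diff_distrib by linarith
  ultimately have "\<bar>t * (f_uv - f_vu)\<bar> \<le> 4 * E"
    using eq by blast
  then show ?thesis
    using t(1) by (simp add: abs_mult E_def f_uv_def f_vu_def)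
qed

lemma pv_pu_eq_pu_pv:
  fixes f :: "complex \<Rightarrow> real"
  assumes "open S" "z \<in> S" "C2_on S f"
  shows "pv (pu f) z = pu (pv f) z"
  using mixed_partials_close[OF assms, of "\<bar>pv (pu f) z - pu (pv f) z\<bar> / 16"]
  by (cases "pv (pu f) z = pu (pv f) z") auto

lemma Dz_cfun_has_derivative:
  assumes S: "open S" "z \<in> S" and f: "C2_on S f"
  shows "(Dz (cfun f) has_derivative (\<lambda>h.
      (complex_of_real (Re h * pu (pu f) z + Im h * pv (pu f) z)
       - \<i> * complex_of_real (Re h * pu (pv f) z + Im h * pv (pv f) z)) / 2)) (at z)"
proof -
  have f1: "C1_on S f" "C1_on S (pu f)" "C1_on S (pv f)"
    using f unfolding C2_on_def by auto
  have "((\<lambda>w. (complex_of_real (pu f w) - \<i> * complex_of_real (pv f w)) / 2) has_derivative (\<lambda>h.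
      (complex_of_real (Re h * pu (pu f) z + Im h * pv (pu f) z)
       - \<i> * complex_of_real (Re h * pu (pv f) z + Im h * pv (pv f) z)) / 2)) (at z)"
    using C1_on_has_derivative[OF f1(2) S(2)] C1_on_has_derivative[OF f1(3) S(2)]
    by (auto intro!: derivative_eq_intros)
  then show ?thesis
    by (rule has_derivative_transform_within_open[OF _ S])
       (use f1(1) in \<open>simp add: Dz_cfun C1_on_def\<close>)
qed

lemma C1_on_Dz_cfun:
  assumes "open S" "C2_on S f"
  shows "C1_on S (Dz (cfun f))"
proof -
  note D = Dz_cfun_has_derivative[OF assms(1) _ assms(2)]
  have c: "continuous_on S (pu (pu f))" "continuous_on S (pu (pv f))"
    "continuous_on S (pv (pu f))" "continuous_on S (pv (pv f))"
    using assms(2) unfolding C2_on_def C1_on_def by auto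
  have "continuous_on S (\<lambda>w. (complex_of_real (pu (pu f) w) - \<i> * complex_of_real (pu (pv f) w)) / 2)"
    by (intro continuous_intros c) auto
  then have "continuous_on S (pu (Dz (cfun f)))"
    by (rule continuous_on_eq) (simp add: pu_eq_derivative[OF D])
  moreover have
    "continuous_on S (\<lambda>w. (complex_of_real (pv (pu f) w) - \<i> * complex_of_real (pv (pv f) w)) / 2)"
    by (intro continuous_intros c) auto
  then have "continuous_on S (pv (Dz (cfun f)))"
    by (rule continuous_on_eq) (simp add: pv_eq_derivative[OF D])
  ultimately show ?thesis
    using D unfolding C1_on_def differentiable_def by blast
qed

lemma Dzb_Dz_cfun:
  assumes "open S" "z \<in> S" "C2_on S f"
  shows "Dzb (Dz (cfun f)) z = complex_of_real ((pu (pu f) z + pv (pv f) z) / 4)"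
  unfolding Dzb_eq_derivative[OF Dz_cfun_has_derivative[OF assms]] pv_pu_eq_pu_pv[OF assms]
  by (simp add: complex_eq_iff field_simps)

section \<open>Real primitives of closed 1-forms\<close>

definition signed_integral :: "(real \<Rightarrow> real) \<Rightarrow> real \<Rightarrow> real \<Rightarrow> real" where
  "signed_integral f c x = (if c \<le> x then integral {c..x} f else - integral {x..c} f)"

lemma signed_integral_eq_diff:
  assumes f: "continuous_on {l..r} f" and "c \<in> {l..r}" "y \<in> {l..r}"
  shows "signed_integral f c y = integral {l..y} f - integral {l..c} f"
proof (cases "c \<le> y")
  case True
  have "integral {l..c} f + integral {c..y} f = integral {l..y} f"
    using assms True
    by (intro Henstock_Kurzweil_Integration.integral_combine integrable_continuous_real
        continuous_on_subset[OF f]) auto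
  then show ?thesis using True by (simp add: signed_integral_def)
next
  case False
  have "integral {l..y} f + integral {y..c} f = integral {l..c} f"
    using assms False
    by (intro Henstock_Kurzweil_Integration.integral_combine integrable_continuous_real
        continuous_on_subset[OF f]) auto
  then show ?thesis using False by (simp add: signed_integral_def)
qed

lemma has_real_derivative_signed_integral:
  assumes J: "open J" "is_interval J" "c \<in> J" "x \<in> J" and f: "continuous_on J f"
  shows "(signed_integral f c has_real_derivative f x) (at x)"
proof -
  have "min c x \<in> J" "max c x \<in> J"
    by (simp_all add: min_def max_def J(3,4))
  then obtain d1 d2 where d1: "d1 > 0" "ball (min c x) d1 \<subseteq> J"
    and d2: "d2 > 0" "ball (max c x) d2 \<subseteq> J"
    by (meson J(1) openE)
  define l r where "l = min c x - d1 / 2" and "r = max c x + d2 / 2"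
  have "l \<in> ball (min c x) d1" "r \<in> ball (max c x) d2"
    using d1(1) d2(1) by (simp_all add: l_def r_def dist_real_def)
  then have "l \<in> J" "r \<in> J" using d1(2) d2(2) by auto
  then have "{l..r} \<subseteq> J"
    using J(2) unfolding is_interval_1 by (meson atLeastAtMost_iff subsetI)
  then have cont: "continuous_on {l..r} f" by (rule continuous_on_subset[OF f])
  have x: "x \<in> {l<..<r}" and c: "c \<in> {l..r}"
    using d1(1) d2(1) by (auto simp: l_def r_def)
  have "((\<lambda>y. integral {l..y} f - integral {l..c} f) has_real_derivative f x) (at x within {l..r})"
    using DERIV_diff[OF integral_has_real_derivative[OF cont] DERIV_const, of x] x by simp
  then have "((\<lambda>y. integral {l..y} f - integral {l..c} f) has_real_derivative f x)
      (at x within {l<..<r})"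
    by (rule has_field_derivative_subset) auto
  then have "((\<lambda>y. integral {l..y} f - integral {l..c} f) has_real_derivative f x) (at x)"
    unfolding at_within_open[OF x open_greaterThanLessThan] .
  then show ?thesis
    by (rule has_field_derivative_transform_within_open[where S="{l<..<r}"])
       (use x c in \<open>auto intro!: signed_integral_eq_diff[OF cont, symmetric]\<close>)
qed

lemma continuous_on_vertical_slice:
  assumes "continuous_on (X \<times> Y) (\<lambda>(x, y). f x y)" "x \<in> X"
  shows "continuous_on Y (f x)"
proof -
  have "continuous_on Y (\<lambda>y. (\<lambda>(x, y). f x y) (x, y))"
    using assms by (intro continuous_on_compose2[OF assms(1)]) (auto intro!: continuous_intros)
  then show ?thesis by simp
qed

lemma continuous_on_horizontal_slice:
  assumes "continuous_on (X \<times> Y) (\<lambda>(x, y). f x y)" "y \<in> Y"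
  shows "continuous_on X (\<lambda>x. f x y)"
proof -
  have "continuous_on X (\<lambda>x. (\<lambda>(x, y). f x y) (x, y))"
    using assms by (intro continuous_on_compose2[OF assms(1)]) (auto intro!: continuous_intros)
  then show ?thesis by simp
qed

lemma has_real_derivative_integral_closed_form:
  fixes a b c :: "real \<Rightarrow> real \<Rightarrow> real"
  assumes J: "is_interval J" "p \<in> J" "q \<in> J" "p \<le> q"
    and a_y: "\<And>x y. y \<in> J \<Longrightarrow> ((\<lambda>y. a x y) has_real_derivative c x y) (at y)"
    and b_x: "\<And>x y. y \<in> J \<Longrightarrow> ((\<lambda>x. b x y) has_real_derivative c x y) (at x)"
    and cont_b: "continuous_on (UNIV \<times> J) (\<lambda>(x, y). b x y)"
    and cont_c: "continuous_on (UNIV \<times> J) (\<lambda>(x, y). c x y)"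
  shows "((\<lambda>x. integral {p..q} (b x)) has_real_derivative a x q - a x p) (at x)"
proof -
  have sub: "{p..q} \<subseteq> J"
    using J unfolding is_interval_1 by (meson atLeastAtMost_iff subsetI)
  have "((\<lambda>x. integral (cbox p q) (b x)) has_vector_derivative integral (cbox p q) (c x))
      (at x within UNIV)"
  proof (rule leibniz_rule_vector_derivative)
    show "((\<lambda>x. b x t) has_vector_derivative c x t) (at x within UNIV)"
      if "t \<in> cbox p q" for x t
      using b_x[of t x] that sub by (auto simp: has_real_derivative_iff_has_vector_derivative)
    have "continuous_on {p..q} (b x)" for x
      using continuous_on_vertical_slice[OF cont_b] sub by (blast intro: continuous_on_subset)
    then show "b x integrable_on cbox p q" for x
      by (simp add: integrable_continuous_real)
    show "continuous_on (UNIV \<times> cbox p q) (\<lambda>(x, t). c x t)"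
      using sub by (auto intro: continuous_on_subset[OF cont_c])
  qed auto
  moreover have "((c x) has_integral (a x q - a x p)) {p..q}"
  proof (rule fundamental_theorem_of_calculus[OF J(4)])
    fix t assume "t \<in> {p..q}"
    with sub a_y[of t x] have "(a x has_vector_derivative c x t) (at t)"
      by (auto simp: has_real_derivative_iff_has_vector_derivative)
    then show "(a x has_vector_derivative c x t) (at t within {p..q})"
      by (rule has_vector_derivative_at_within)
  qed
  ultimately show ?thesis
    by (simp add: has_real_derivative_iff_has_vector_derivative integral_unique)
qed

lemma has_real_derivative_signed_integral_closed_form:
  fixes a b c :: "real \<Rightarrow> real \<Rightarrow> real"
  assumes J: "is_interval J" "v0 \<in> J" "y \<in> J"
    and a_y: "\<And>x y. y \<in> J \<Longrightarrow> ((\<lambda>y. a x y) has_real_derivative c x y) (at y)"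
    and b_x: "\<And>x y. y \<in> J \<Longrightarrow> ((\<lambda>x. b x y) has_real_derivative c x y) (at x)"
    and cont_b: "continuous_on (UNIV \<times> J) (\<lambda>(x, y). b x y)"
    and cont_c: "continuous_on (UNIV \<times> J) (\<lambda>(x, y). c x y)"
  shows "((\<lambda>x. signed_integral (b x) v0 y) has_real_derivative a x y - a x v0) (at x)"
proof (cases "v0 \<le> y")
  case True
  then show ?thesis
    using has_real_derivative_integral_closed_form[OF J True a_y b_x cont_b cont_c]
    by (simp add: signed_integral_def)
next
  case False
  then show ?thesis
    using DERIV_minus[OF has_real_derivative_integral_closed_form[OF J(1,3,2) _ a_y b_x cont_b cont_c]]
    by (simp add: signed_integral_def)
qed

lemma has_derivative_of_partials:
  fixes f :: "real \<Rightarrow> real \<Rightarrow> real"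
  assumes J: "open J" "is_interval J" "y \<in> J"
    and f_x: "((\<lambda>x. f x y) has_real_derivative a) (at x)"
    and f_y: "\<And>x y. y \<in> J \<Longrightarrow> ((\<lambda>y. f x y) has_real_derivative b x y) (at y)"
    and cont_b: "continuous_on (UNIV \<times> J) (\<lambda>(x, y). b x y)"
  shows "((\<lambda>(x, y). f x y) has_derivative (\<lambda>(s, t). s * a + t * b x y)) (at (x, y))"
proof -
  have "((\<lambda>(x, y). f x y) has_derivative
      (\<lambda>(s, t). s * a + blinfun_apply (blinfun_scaleR_left (b x y)) t)) (at (x, y) within UNIV \<times> J)"
  proof (rule has_derivative_partialsI)
    show "((\<lambda>x. f x y) has_derivative (\<lambda>s. s * a)) (at x within UNIV)"
      using f_x unfolding has_field_derivative_def
      by (rule has_derivative_eq_rhs) (simp add: fun_eq_iff)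
    show "((\<lambda>y. f x y) has_derivative blinfun_apply (blinfun_scaleR_left (b x y))) (at y within J)"
      if "y \<in> J" for x y
    proof -
      have "((\<lambda>y. f x y) has_derivative (\<lambda>t. t *\<^sub>R b x y)) (at y)"
        using f_y[OF that, of x] unfolding has_field_derivative_def
        by (rule has_derivative_eq_rhs) (simp add: fun_eq_iff)
      then show ?thesis
        unfolding blinfun_scaleR_left.rep_eq by (rule has_derivative_at_withinI)
    qed
    have "continuous_on (UNIV \<times> J) (\<lambda>z. blinfun_scaleR_left ((\<lambda>(x, y). b x y) z))"
      by (intro continuous_intros cont_b)
    then show "continuous (at (x, y) within UNIV \<times> J) (\<lambda>(x, y). blinfun_scaleR_left (b x y))"
      using J(3) by (simp add: split_beta' continuous_on_eq_continuous_within)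
  qed (use J in \<open>auto intro: is_interval_convex\<close>)
  moreover have "at (x, y) within UNIV \<times> J = at (x, y)"
    using J by (intro at_within_open) (auto intro: open_Times)
  ultimately show ?thesis by simp
qed

lemma closed_form_has_potential_strip:
  fixes a b c :: "real \<Rightarrow> real \<Rightarrow> real"
  assumes J: "open J" "is_interval J" "v0 \<in> J"
    and a_y: "\<And>x y. y \<in> J \<Longrightarrow> ((\<lambda>y. a x y) has_real_derivative c x y) (at y)"
    and b_x: "\<And>x y. y \<in> J \<Longrightarrow> ((\<lambda>x. b x y) has_real_derivative c x y) (at x)"
    and cont_a: "continuous_on (UNIV \<times> J) (\<lambda>(x, y). a x y)"
    and cont_b: "continuous_on (UNIV \<times> J) (\<lambda>(x, y). b x y)"
    and cont_c: "continuous_on (UNIV \<times> J) (\<lambda>(x, y). c x y)"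
  shows "\<exists>f. \<forall>x y. y \<in> J \<longrightarrow>
    ((\<lambda>(x, y). f x y) has_derivative (\<lambda>(s, t). s * a x y + t * b x y)) (at (x, y))"
proof -
  define f where "f x y = signed_integral (\<lambda>s. a s v0) 0 x + signed_integral (b x) v0 y" for x y
  have "((\<lambda>(x, y). f x y) has_derivative (\<lambda>(s, t). s * a x y + t * b x y)) (at (x, y))"
    if y: "y \<in> J" for x y
  proof (rule has_derivative_of_partials[OF J(1,2) y _ _ cont_b])
    have "((\<lambda>x. signed_integral (\<lambda>s. a s v0) 0 x) has_real_derivative a x v0) (at x)"
      using continuous_on_horizontal_slice[OF cont_a J(3)]
      by (intro has_real_derivative_signed_integral) auto
    from DERIV_add[OF this
        has_real_derivative_signed_integral_closed_form[OF J(2,3) y a_y b_x cont_b cont_c]]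
    show "((\<lambda>x. f x y) has_real_derivative a x y) (at x)"
      by (simp add: f_def)
    show "((\<lambda>y. f x y) has_real_derivative b x y) (at y)" if "y \<in> J" for x y
      using DERIV_add[OF DERIV_const has_real_derivative_signed_integral[OF J that
            continuous_on_vertical_slice[OF cont_b]]]
      by (simp add: f_def)
  qed
  then show ?thesis by blast
qed

text \<open>A 1-form \<open>Re (\<phi> dz)\<close> is closed exactly when \<open>Dzb \<phi>\<close> is real.\<close>

definition exact_closed_forms :: "complex set \<Rightarrow> bool" where
  "exact_closed_forms S \<longleftrightarrow>
    (\<forall>\<phi> :: complex \<Rightarrow> complex. C1_on S \<phi> \<and> (\<forall>w\<in>S. Dzb \<phi> w \<in> \<real>) \<longrightarrow>
      (\<exists>F :: complex \<Rightarrow> real. \<forall>w\<in>S. (F has_derivative (\<lambda>h. Re (\<phi> w * h))) (at w)))"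

lemma continuous_on_strip_coordinates:
  assumes "continuous_on {w. Im w \<in> J} g"
  shows "continuous_on (UNIV \<times> J) (\<lambda>(x, y). g (complex_of_real x + \<i> * complex_of_real y))"
proof -
  have "continuous_on (UNIV \<times> J) (\<lambda>p. g (complex_of_real (fst p) + \<i> * complex_of_real (snd p)))"
    by (rule continuous_on_compose2[OF assms]) (auto intro!: continuous_intros)
  then show ?thesis by (simp add: case_prod_beta)
qed

lemma has_derivative_Re_Im_compose:
  assumes "((\<lambda>(x, y). f x y) has_derivative (\<lambda>(s, t). s * a + t * b)) (at (Re w, Im w))"
  shows "((\<lambda>w. f (Re w) (Im w)) has_derivative (\<lambda>h. Re h * a + Im h * b)) (at w)"
proof -
  have "((\<lambda>w. (Re w, Im w)) has_derivative (\<lambda>h. (Re h, Im h))) (at w)"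
    by (auto intro!: derivative_eq_intros)
  from has_derivative_compose[OF this assms] show ?thesis by simp
qed

lemma exact_closed_forms_strip:
  assumes J: "open J" "is_interval J"
  shows "exact_closed_forms {w. Im w \<in> J}"
  unfolding exact_closed_forms_def
proof (intro allI impI)
  define T where "T = {w. Im w \<in> J}"
  define C where "C x y = complex_of_real x + \<i> * complex_of_real y" for x y
  fix \<phi> :: "complex \<Rightarrow> complex"
  assume "C1_on {w. Im w \<in> J} \<phi> \<and> (\<forall>w\<in>{w. Im w \<in> J}. Dzb \<phi> w \<in> \<real>)"
  then have \<phi>: "C1_on T \<phi>" and closed: "\<And>w. w \<in> T \<Longrightarrow> Dzb \<phi> w \<in> \<real>"
    unfolding T_def by auto
  have D\<phi>: "(\<phi> has_derivative (\<lambda>h. Re h *\<^sub>R pu \<phi> w + Im h *\<^sub>R pv \<phi> w)) (at w)" if "w \<in> T" for w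
    by (rule C1_on_has_derivative[OF \<phi> that])
  have a_y: "((\<lambda>y. Re (\<phi> (C x y))) has_real_derivative Re (pv \<phi> (C x y))) (at y)"
    if "y \<in> J" for x y
    using has_real_derivative_vertical[OF has_derivative_Re[OF D\<phi>]] that by (simp add: C_def T_def)
  have b_x: "((\<lambda>x. - Im (\<phi> (C x y))) has_real_derivative Re (pv \<phi> (C x y))) (at x)"
    if "y \<in> J" for x y
  proof -
    have "Im (pu \<phi> (C x y)) + Re (pv \<phi> (C x y)) = 0"
      using closed[of "C x y"] that by (auto simp: C_def T_def Dzb_def complex_is_Real_iff)
    then have "Re (pv \<phi> (C x y)) = - Im (pu \<phi> (\<i> * complex_of_real y + complex_of_real x))"
      by (simp add: C_def add.commute)
    moreover have "((\<lambda>s. - Im (\<phi> (\<i> * complex_of_real y + complex_of_real s)))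
        has_real_derivative - Im (pu \<phi> (\<i> * complex_of_real y + complex_of_real x))) (at x)"
      using has_real_derivative_horizontal[OF has_derivative_minus[OF has_derivative_Im[OF D\<phi>]]] that
      by (simp add: T_def)
    ultimately show ?thesis by (simp add: C_def add.commute)
  qed
  have "continuous_on T (\<lambda>w. Re (\<phi> w))" "continuous_on T (\<lambda>w. - Im (\<phi> w))"
    "continuous_on T (\<lambda>w. Re (pv \<phi> w))"
    using \<phi> C1_on_imp_continuous_on[OF \<phi>] unfolding C1_on_def by (auto intro!: continuous_intros)
  note cont = this[unfolded T_def, THEN continuous_on_strip_coordinates, folded C_def]
  show "\<exists>F::complex \<Rightarrow> real. \<forall>w\<in>{w. Im w \<in> J}. (F has_derivative (\<lambda>h. Re (\<phi> w * h))) (at w)"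
  proof (cases "J = {}")
    case False
    then obtain v0 where v0: "v0 \<in> J" by blast
    from closed_form_has_potential_strip[OF J v0 a_y b_x cont]
    obtain f where f: "\<And>x y. y \<in> J \<Longrightarrow> ((\<lambda>(x, y). f x y) has_derivative
        (\<lambda>(s, t). s * Re (\<phi> (C x y)) + t * - Im (\<phi> (C x y)))) (at (x, y))"
      by blast
    have "C (Re w) (Im w) = w" for w by (simp add: C_def complex_eq_iff)
    then have "((\<lambda>w. f (Re w) (Im w)) has_derivative (\<lambda>h. Re (\<phi> w * h))) (at w)" if "Im w \<in> J" for w
      using has_derivative_Re_Im_compose[OF f[OF that]] by (simp add: algebra_simps)
    then show ?thesis by blast
  qed simp
qed

lemma Dzb_pullback_holomorphic:
  assumes T: "open T" "k holomorphic_on T" "w \<in> T" and \<phi>: "\<phi> differentiable (at (k w))"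
  shows "Dzb (\<lambda>w. \<phi> (k w) * deriv k w) w = Dzb \<phi> (k w) * complex_of_real ((cmod (deriv k w))\<^sup>2)"
proof -
  have dk: "(k has_field_derivative deriv k w) (at w)"
    using holomorphic_derivI[OF T(2,1,3)] .
  have "k differentiable (at w)"
    using dk unfolding differentiable_def has_field_derivative_def by blast
  from differentiable_chain_at[OF this \<phi>]
  have "(\<lambda>w. \<phi> (k w)) differentiable (at w)" by (simp add: o_def)
  then have "Dzb (\<lambda>w. \<phi> (k w) * deriv k w) w = Dzb (\<lambda>w. \<phi> (k w)) w * deriv k w"
    using holomorphic_derivI[OF holomorphic_deriv[OF T(2,1)] T(1,3)] by (rule Dzb_mult_holomorphic)
  also have "\<dots> = Dzb \<phi> (k w) * (cnj (deriv k w) * deriv k w)"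
    by (simp add: Dzb_compose_holomorphic[OF \<phi> dk] mult.assoc)
  also have "\<dots> = Dzb \<phi> (k w) * complex_of_real ((cmod (deriv k w))\<^sup>2)"
    by (metis complex_norm_square mult.commute)
  finally show ?thesis .
qed

lemma deriv_left_inverse:
  assumes S: "open S" "z \<in> S" and kl: "\<And>z. z \<in> S \<Longrightarrow> k (l z) = z"
    and k: "(k has_field_derivative k') (at (l z))" and l: "(l has_field_derivative l') (at z)"
  shows "k' * l' = 1"
proof -
  have "((\<lambda>z. k (l z)) has_field_derivative k' * l') (at z)"
    using DERIV_chain2[OF k l] .
  moreover have "((\<lambda>z. k (l z)) has_field_derivative 1) (at z)"
    by (rule has_field_derivative_transform_within_open[OF DERIV_ident S]) (simp add: kl)
  ultimately show ?thesis by (rule DERIV_unique)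
qed

lemma exact_closed_forms_biholomorphic:
  assumes T: "exact_closed_forms T" "open T" and S: "open S"
    and k: "k holomorphic_on T" "k ` T \<subseteq> S"
    and l: "l holomorphic_on S" "l ` S \<subseteq> T"
    and kl: "\<And>z. z \<in> S \<Longrightarrow> k (l z) = z"
  shows "exact_closed_forms S"
  unfolding exact_closed_forms_def
proof (intro allI impI)
  fix \<phi> :: "complex \<Rightarrow> complex"
  assume "C1_on S \<phi> \<and> (\<forall>w\<in>S. Dzb \<phi> w \<in> \<real>)"
  then have \<phi>: "C1_on S \<phi>" and closed: "\<And>w. w \<in> S \<Longrightarrow> Dzb \<phi> w \<in> \<real>" by auto
  define \<psi> where "\<psi> w = \<phi> (k w) * deriv k w" for w
  have "C1_on T \<psi>"
    unfolding \<psi>_def using C1_on_compose_holomorphic[OF \<phi> T(2) k]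
      holomorphic_on_imp_C1_on[OF T(2) holomorphic_deriv[OF k(1) T(2)]]
    by (rule C1_on_mult)
  moreover have "Dzb \<psi> w \<in> \<real>" if "w \<in> T" for w
    using Dzb_pullback_holomorphic[OF T(2) k(1) that, of \<phi>] closed[of "k w"] \<phi> k(2) that
    unfolding \<psi>_def C1_on_def by auto
  ultimately obtain F where F: "\<And>w. w \<in> T \<Longrightarrow> (F has_derivative (\<lambda>h. Re (\<psi> w * h))) (at w)"
    using T(1) unfolding exact_closed_forms_def by blast
  have "((\<lambda>z. F (l z)) has_derivative (\<lambda>h. Re (\<phi> z * h))) (at z)" if z: "z \<in> S" for z
  proof -
    have lz: "l z \<in> T" using l(2) z by blast
    have dl: "(l has_field_derivative deriv l z) (at z)"
      using holomorphic_derivI[OF l(1) S z] .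
    have "deriv k (l z) * deriv l z = 1"
      using deriv_left_inverse[OF S z kl holomorphic_derivI[OF k(1) T(2) lz] dl] .
    then have "\<psi> (l z) * deriv l z = \<phi> z"
      using kl[OF z] by (simp add: \<psi>_def mult.assoc)
    moreover have "((\<lambda>z. F (l z)) has_derivative (\<lambda>h. Re (\<psi> (l z) * deriv l z * h))) (at z)"
      using has_derivative_compose[OF dl[unfolded has_field_derivative_def] F[OF lz]]
      by (simp add: mult.assoc)
    ultimately show ?thesis by simp
  qed
  then show "\<exists>F::complex \<Rightarrow> real. \<forall>w\<in>S. (F has_derivative (\<lambda>h. Re (\<phi> w * h))) (at w)"
    by blast
qed

lemma norm_cayley_less_1:
  fixes w :: complex
  assumes "Im w > 0"
  shows "cmod ((w - \<i>) / (w + \<i>)) < 1"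
proof -
  have "w + \<i> \<noteq> 0" using assms by (auto simp: complex_eq_iff)
  moreover have "(cmod (w - \<i>))\<^sup>2 < (cmod (w + \<i>))\<^sup>2"
    using assms unfolding cmod_power2 by (simp add: power2_eq_square algebra_simps)
  then have "cmod (w - \<i>) < cmod (w + \<i>)"
    by (rule power_less_imp_less_base) simp
  ultimately show ?thesis by (simp add: norm_divide divide_less_eq)
qed

lemma Im_inverse_cayley_pos:
  fixes z :: complex
  assumes "cmod z < 1"
  shows "Im (\<i> * (1 + z) / (1 - z)) > 0"
proof -
  have "(Re z)\<^sup>2 + (Im z)\<^sup>2 < 1"
    using assms by (simp add: cmod_def)
  then have "Im (\<i> * (1 + z)) * Re (1 - z) - Re (\<i> * (1 + z)) * Im (1 - z) > 0"
    by (simp add: power2_eq_square algebra_simps)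
  moreover have "z \<noteq> 1" using assms by auto
  then have "(Re (1 - z))\<^sup>2 + (Im (1 - z))\<^sup>2 > 0"
    by (simp add: complex_eq_iff sum_power2_gt_zero_iff)
  ultimately show ?thesis unfolding Im_divide by simp
qed

lemma cayley_inverse_cayley:
  fixes z :: complex
  assumes "z \<noteq> 1"
  shows "(\<i> * (1 + z) / (1 - z) - \<i>) / (\<i> * (1 + z) / (1 - z) + \<i>) = z"
proof -
  have "1 - z \<noteq> 0" using assms by simp
  then show ?thesis by (simp add: field_simps)
qed

text \<open>The Cayley transform maps the upper half plane, a strip, onto the disc.\<close>

lemma exact_closed_forms_ball: "exact_closed_forms (ball 0 1)"
proof -
  define H where "H = {w. Im w \<in> {0<..}}"
  define cayley where "cayley w = (w - \<i>) / (w + \<i>)" for w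
  define cayley_inv where "cayley_inv z = \<i> * (1 + z) / (1 - z)" for z
  have "open H" using open_halfspace_Im_gt[of 0] by (simp add: H_def)
  show ?thesis
  proof (rule exact_closed_forms_biholomorphic[OF _ \<open>open H\<close> open_ball])
    show "exact_closed_forms H"
      unfolding H_def by (rule exact_closed_forms_strip) auto
    show "cayley holomorphic_on H"
      unfolding cayley_def H_def by (intro holomorphic_intros) (auto simp: complex_eq_iff)
    show "cayley ` H \<subseteq> ball 0 1"
      using norm_cayley_less_1 by (auto simp: cayley_def H_def)
    show "cayley_inv holomorphic_on ball 0 1"
      unfolding cayley_inv_def by (intro holomorphic_intros) auto
    show "cayley_inv ` ball 0 1 \<subseteq> H"
      using Im_inverse_cayley_pos by (auto simp: cayley_inv_def H_def)
    show "cayley (cayley_inv z) = z" if "z \<in> ball 0 1" for z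
    proof -
      have "z \<noteq> 1" using that by auto
      then show ?thesis using cayley_inverse_cayley[of z] by (simp add: cayley_def cayley_inv_def)
    qed
  qed
qed

lemma exact_closed_forms_simply_connected:
  assumes S: "open S" "simply_connected S"
  shows "exact_closed_forms S"
proof -
  have "S = {} \<or> S = UNIV \<or> (\<exists>f g. f holomorphic_on S \<and> g holomorphic_on ball 0 1 \<and>
      (\<forall>z\<in>S. f z \<in> ball 0 1 \<and> g (f z) = z) \<and> (\<forall>z\<in>ball 0 1. g z \<in> S \<and> f (g z) = z))"
    using S simply_connected_eq_biholomorphic_to_disc by blast
  then consider "S = {}" | "S = UNIV" | f g where "f holomorphic_on S" "g holomorphic_on ball 0 1"
    "\<And>z. z \<in> S \<Longrightarrow> f z \<in> ball 0 1 \<and> g (f z) = z"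
    "\<And>z. z \<in> ball 0 1 \<Longrightarrow> g z \<in> S \<and> f (g z) = z"
    by metis
  then show ?thesis
  proof cases
    case 1
    then show ?thesis by (simp add: exact_closed_forms_def)
  next
    case 2
    then show ?thesis using exact_closed_forms_strip[of UNIV] by simp
  next
    case (3 f g)
    show ?thesis
      by (rule exact_closed_forms_biholomorphic[OF exact_closed_forms_ball open_ball S(1) 3(2) _ 3(1)])
         (use 3 in auto)
  qed
qed

section \<open>The Lorentzian form on the Weierstrass vectors\<close>

lemma vector_4 [simp]:
  "(vector [x, y, z, w] :: 'a::zero ^ 4) $ 1 = x"
  "(vector [x, y, z, w] :: 'a::zero ^ 4) $ 2 = y"
  "(vector [x, y, z, w] :: 'a::zero ^ 4) $ 3 = z"
  "(vector [x, y, z, w] :: 'a::zero ^ 4) $ 4 = w"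
  unfolding vector_def by simp_all

lemma lor_add_left: "lor (x + y) u = lor x u + lor y u"
  and lor_add_right: "lor u (x + y) = lor u x + lor u y"
  and lor_scale_left: "lor (c *s x) u = c * lor x u"
  and lor_scale_right: "lor u (c *s x) = c * lor u x"
  by (simp_all add: lor_def algebra_simps)

lemma cconj_add: "cconj (x + y) = cconj x + cconj y"
  and cconj_scale: "cconj (c *s x) = cnj c *s cconj x"
  by (simp_all add: cconj_def vec_eq_iff)

lemma lor_Pvec_Pvec: "lor (Pvec g) (Pvec g) = 0"
  and lor_Qvec_Qvec: "lor (Qvec g) (Qvec g) = 0"
  by (simp_all add: lor_def Pvec_def Qvec_def algebra_simps)

lemma lor_Pvec_Qvec: "g \<noteq> 0 \<Longrightarrow> lor (Pvec g) (Qvec g) = 0"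
  and lor_Qvec_Pvec: "g \<noteq> 0 \<Longrightarrow> lor (Qvec g) (Pvec g) = 0"
  by (simp_all add: lor_def Pvec_def Qvec_def field_simps)

lemma lor_Gvec_Gvec: "lor (Gvec g) (Gvec g) = 0"
proof -
  have "(2 * Re g)\<^sup>2 + (2 * Im g)\<^sup>2 + (-1 + (cmod g)\<^sup>2)\<^sup>2 - (1 + (cmod g)\<^sup>2)\<^sup>2 = 0"
    unfolding cmod_power2 by (simp add: power2_eq_square algebra_simps)
  then have "complex_of_real
      ((2 * Re g)\<^sup>2 + (2 * Im g)\<^sup>2 + (-1 + (cmod g)\<^sup>2)\<^sup>2 - (1 + (cmod g)\<^sup>2)\<^sup>2) = 0"
    by (simp only: of_real_eq_0_iff)
  then show ?thesis by (simp add: lor_def Gvec_def power2_eq_square)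
qed

lemma Gvec_eq_Pvec_Qvec:
  assumes "g \<noteq> 0"
  shows "Gvec g = complex_of_real ((cmod g)\<^sup>2) *s Pvec g + Qvec g"
proof -
  have "complex_of_real (2 * Re g) = g + cnj g" "complex_of_real (2 * Im g) = \<i> * (cnj g - g)"
    by (simp_all add: complex_eq_iff)
  moreover have "complex_of_real ((cmod g)\<^sup>2) = g * cnj g" by (rule complex_norm_square)
  ultimately show ?thesis
    using assms unfolding Gvec_def Pvec_def Qvec_def
    by (simp add: vec_eq_iff forall_4 field_simps)
qed

lemma lor_Xz_Xz:
  assumes "g \<noteq> 0"
  shows "lor (p *s Pvec g + q *s Qvec g) (p *s Pvec g + q *s Qvec g) = 0"
  using assms
  by (simp add: lor_add_left lor_add_right lor_scale_left lor_scale_right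
      lor_Pvec_Pvec lor_Qvec_Qvec lor_Pvec_Qvec lor_Qvec_Pvec)

lemma lor_Xz_Gvec:
  assumes "g \<noteq> 0"
  shows "lor (p *s Pvec g + q *s Qvec g) (Gvec g) = 0"
  using assms
  by (simp add: Gvec_eq_Pvec_Qvec lor_add_left lor_add_right lor_scale_left lor_scale_right
      lor_Pvec_Pvec lor_Qvec_Qvec lor_Pvec_Qvec lor_Qvec_Pvec)

lemma lor_Xz_cconj_Xz:
  assumes "g \<noteq> 0"
  shows "2 * lor (p *s Pvec g + q *s Qvec g) (cconj (p *s Pvec g + q *s Qvec g))
    = complex_of_real (4 / (cmod g)\<^sup>2 * (cmod (p - complex_of_real ((cmod g)\<^sup>2) * q))\<^sup>2)"
proof -
  define N where "N = g * cnj g"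
  have N: "complex_of_real ((cmod g)\<^sup>2) = N" "cnj N = N" "N \<noteq> 0"
    unfolding N_def using complex_norm_square assms by auto
  have "lor (Pvec g) (cconj (Pvec g)) = 2 / N" "lor (Qvec g) (cconj (Qvec g)) = 2 * N"
    "lor (Pvec g) (cconj (Qvec g)) = -2" "lor (Qvec g) (cconj (Pvec g)) = -2"
    using assms by (simp_all add: lor_def cconj_def Pvec_def Qvec_def N_def field_simps)
  then have "2 * lor (p *s Pvec g + q *s Qvec g) (cconj (p *s Pvec g + q *s Qvec g))
      = 4 / N * ((p - N * q) * cnj (p - N * q))"
    using N by (simp add: cconj_add cconj_scale lor_add_left lor_add_right lor_scale_left
        lor_scale_right field_simps)
  also have "\<dots> = complex_of_real (4 / (cmod g)\<^sup>2 * (cmod (p - complex_of_real ((cmod g)\<^sup>2) * q))\<^sup>2)"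
    using complex_norm_square[of "p - N * q"]
    by (simp only: of_real_mult of_real_divide of_real_numeral N(1))
  finally show ?thesis .
qed

section \<open>Wirtinger derivatives of vector-valued maps\<close>

lemma has_derivative_vec_lambda:
  fixes f :: "'a::euclidean_space \<Rightarrow> 'n::finite \<Rightarrow> 'b::real_normed_vector"
  assumes f: "\<And>i. ((\<lambda>x. f x i) has_derivative f' i) (at z)"
  shows "((\<lambda>x. \<chi> i. f x i) has_derivative (\<lambda>h. \<chi> i. f' i h)) (at z)"
proof -
  have "linear (\<lambda>h. \<chi> i. f' i h)"
    using linear_add[OF has_derivative_linear[OF f]] linear_scale[OF has_derivative_linear[OF f]]
    by (intro linearI) (simp_all add: vec_eq_iff)
  then have "bounded_linear (\<lambda>h. \<chi> i. f' i h)" by (simp add: linear_conv_bounded_linear)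
  moreover have "((\<lambda>y. (\<chi> i. (f y i - f z i - f' i (y - z)) /\<^sub>R norm (y - z))) \<longlongrightarrow> (\<chi> i. 0)) (at z)"
    using f unfolding has_derivative_at_within by (intro tendsto_vec_lambda) simp
  moreover have "(\<chi> i. (f y i - f z i - f' i (y - z)) /\<^sub>R norm (y - z)) =
      ((\<chi> i. f y i) - (\<chi> i. f z i) - (\<chi> i. f' i (y - z))) /\<^sub>R norm (y - z)" for y
    by (simp add: vec_eq_iff)
  ultimately show ?thesis
    unfolding has_derivative_at_within by (simp add: zero_vec_def[symmetric])
qed

lemma bounded_linear_cvec: "bounded_linear cvec"
proof -
  have "linear cvec"
    by (rule linearI) (simp_all add: cvec_def vec_eq_iff of_real_def scaleR_add_left)
  then show ?thesis by (simp add: linear_conv_bounded_linear)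
qed

lemma DzV_cvec:
  assumes "(Y has_derivative DY) (at z)"
  shows "DzV (\<lambda>w. cvec (Y w)) z
    = (\<chi> k. (complex_of_real (DY 1 $ k) - \<i> * complex_of_real (DY \<i> $ k)) / 2)"
proof -
  have D: "((\<lambda>w. cvec (Y w)) has_derivative (\<lambda>h. cvec (DY h))) (at z)"
    using bounded_linear.has_derivative[OF bounded_linear_cvec assms] .
  show ?thesis
    unfolding DzV_def pu_eq_derivative[OF D] pv_eq_derivative[OF D]
    by (simp add: vec_eq_iff cvec_def field_simps)
qed

lemma has_derivative_DzV:
  assumes "Y differentiable (at z)"
  shows "(Y has_derivative (\<lambda>h. \<chi> k. Re (2 * DzV (\<lambda>w. cvec (Y w)) z $ k * h))) (at z)"
proof -
  obtain DY where DY: "(Y has_derivative DY) (at z)"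
    using assms unfolding differentiable_def by blast
  have "DY = (\<lambda>h. \<chi> k. Re (2 * DzV (\<lambda>w. cvec (Y w)) z $ k * h))"
  proof
    fix h
    have "DY h = Re h *\<^sub>R DY 1 + Im h *\<^sub>R DY \<i>"
      by (rule linear_complex_decompose[OF has_derivative_linear[OF DY]])
    then show "DY h = (\<chi> k. Re (2 * DzV (\<lambda>w. cvec (Y w)) z $ k * h))"
      unfolding DzV_cvec[OF DY] by (simp add: vec_eq_iff algebra_simps)
  qed
  with DY show ?thesis by simp
qed

lemma DzV_cvec_eqI:
  assumes "(Y has_derivative (\<lambda>h. \<chi> k. Re (2 * V $ k * h))) (at z)"
  shows "DzV (\<lambda>w. cvec (Y w)) z = V"
  unfolding DzV_cvec[OF assms] by (simp add: vec_eq_iff complex_eq_iff)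

lemma DzbV_cong:
  assumes "open S" "z \<in> S" "\<And>w. w \<in> S \<Longrightarrow> F w = G w"
  shows "DzbV F z = DzbV G z"
  by (simp add: DzbV_def pu_cong[OF assms] pv_cong[OF assms])

lemma DzbV_eq_Dzb:
  fixes F :: "complex \<Rightarrow> complex ^ 4"
  assumes "\<And>k. (\<lambda>w. F w $ k) differentiable (at z)"
  shows "DzbV F z = (\<chi> k. Dzb (\<lambda>w. F w $ k) z)"
proof -
  from assms have "\<forall>k. \<exists>D. ((\<lambda>w. F w $ k) has_derivative D) (at z)"
    unfolding differentiable_def by blast
  from choice[OF this] obtain D where D: "((\<lambda>w. F w $ k) has_derivative D k) (at z)" for k
    by blast
  have DF: "(F has_derivative (\<lambda>h. \<chi> k. D k h)) (at z)"
    using has_derivative_vec_lambda[where f="\<lambda>w k. F w $ k" and f'=D, OF D] by simp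
  show ?thesis
    unfolding DzbV_def pu_eq_derivative[OF DF] pv_eq_derivative[OF DF] vec_eq_iff
    by (simp add: Dzb_eq_derivative[OF D] field_simps)
qed

lemma eq_plus_const_of_same_derivative:
  fixes f g :: "'a::real_normed_vector \<Rightarrow> 'b::real_normed_vector"
  assumes S: "open S" "connected S"
    and "\<And>z. z \<in> S \<Longrightarrow> (f has_derivative D z) (at z)" "\<And>z. z \<in> S \<Longrightarrow> (g has_derivative D z) (at z)"
  shows "\<exists>c. \<forall>z\<in>S. g z = f z + c"
proof (cases "S = {}")
  case False
  then obtain z0 where z0: "z0 \<in> S" by blast
  have "((\<lambda>w. g w - f w) has_derivative (\<lambda>h. 0)) (at z)" if "z \<in> S" for z
    using has_derivative_diff[OF assms(4,3)[OF that]] by simp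
  from has_derivative_zero_unique_connected[OF S this _ z0]
  have "g z - f z = g z0 - f z0" if "z \<in> S" for z
    using that by simp
  then show ?thesis by (intro exI[of _ "g z0 - f z0"]) (auto simp: algebra_simps)
qed simp

section \<open>The Weierstrass representation\<close>

definition weierstrass_Xz ::
  "(complex \<Rightarrow> complex) \<Rightarrow> (complex \<Rightarrow> real) \<Rightarrow> (complex \<Rightarrow> real) \<Rightarrow> complex \<Rightarrow> complex ^ 4" where
  "weierstrass_Xz g P Q z = Dz (cfun P) z *s Pvec (g z) + Dz (cfun Q) z *s Qvec (g z)"

lemma weierstrass_Xz_nth:
  "weierstrass_Xz g P Q z $ k = Dz (cfun P) z * Pvec (g z) $ k + Dz (cfun Q) z * Qvec (g z) $ k"
  by (simp add: weierstrass_Xz_def)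

lemma holomorphic_on_Pvec_nth:
  assumes "g holomorphic_on S" "\<And>z. z \<in> S \<Longrightarrow> g z \<noteq> 0"
  shows "(\<lambda>z. Pvec (g z) $ k) holomorphic_on S"
  using exhaust_4[of k] assms by (auto simp: Pvec_def intro!: holomorphic_intros)

lemma holomorphic_on_Qvec_nth:
  assumes "g holomorphic_on S"
  shows "(\<lambda>z. Qvec (g z) $ k) holomorphic_on S"
  using exhaust_4[of k] assms by (auto simp: Qvec_def intro!: holomorphic_intros)

lemma Gvec_nth_real: "Gvec g $ k \<in> \<real>"
  using exhaust_4[of k] by (auto simp: Gvec_def)

lemma C1_on_weierstrass_Xz_nth:
  assumes "open S" "weierstrass_first_kind S g P Q"
  shows "C1_on S (\<lambda>z. weierstrass_Xz g P Q z $ k)"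
  using assms unfolding weierstrass_Xz_nth weierstrass_first_kind_def
  by (intro C1_on_add C1_on_mult C1_on_Dz_cfun holomorphic_on_imp_C1_on
      holomorphic_on_Pvec_nth holomorphic_on_Qvec_nth) auto

lemma Dzb_weierstrass_Xz_nth:
  assumes S: "open S" "z \<in> S" and W: "weierstrass_first_kind S g P Q"
  shows "Dzb (\<lambda>w. weierstrass_Xz g P Q w $ k) z = Dzb (Dz (cfun Q)) z * Gvec (g z) $ k"
proof -
  have g: "g holomorphic_on S" "\<And>z. z \<in> S \<Longrightarrow> g z \<noteq> 0"
    using W unfolding weierstrass_first_kind_def by auto
  have dp: "Dz (cfun P) differentiable (at z)" and dq: "Dz (cfun Q) differentiable (at z)"
    using W S C1_on_Dz_cfun[OF S(1)] unfolding weierstrass_first_kind_def C1_on_def by auto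
  have dP: "((\<lambda>w. Pvec (g w) $ k) has_field_derivative deriv (\<lambda>w. Pvec (g w) $ k) z) (at z)"
    and dQ: "((\<lambda>w. Qvec (g w) $ k) has_field_derivative deriv (\<lambda>w. Qvec (g w) $ k) z) (at z)"
    using holomorphic_derivI[OF holomorphic_on_Pvec_nth[OF g] S]
      holomorphic_derivI[OF holomorphic_on_Qvec_nth[OF g(1)] S] by auto
  have "Dzb (\<lambda>w. weierstrass_Xz g P Q w $ k) z
      = Dzb (Dz (cfun P)) z * Pvec (g z) $ k + Dzb (Dz (cfun Q)) z * Qvec (g z) $ k"
  proof -
    have dP': "(\<lambda>w. Pvec (g w) $ k) differentiable (at z)"
      and dQ': "(\<lambda>w. Qvec (g w) $ k) differentiable (at z)"
      using dP dQ unfolding differentiable_def has_field_derivative_def by blast+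
    show ?thesis
      unfolding weierstrass_Xz_nth
        Dzb_add[OF differentiable_mult[OF dp dP'] differentiable_mult[OF dq dQ']]
        Dzb_mult_holomorphic[OF dp dP] Dzb_mult_holomorphic[OF dq dQ] ..
  qed
  also have "\<dots> = Dzb (Dz (cfun Q)) z *
      (complex_of_real ((cmod (g z))\<^sup>2) *s Pvec (g z) + Qvec (g z)) $ k"
    using W S(2) unfolding weierstrass_first_kind_def by (simp add: algebra_simps)
  also have "\<dots> = Dzb (Dz (cfun Q)) z * Gvec (g z) $ k"
    using Gvec_eq_Pvec_Qvec g(2)[OF S(2)] by simp
  finally show ?thesis .
qed

lemma weierstrass_potential_exists:
  assumes S: "open S" "simply_connected S" and W: "weierstrass_first_kind S g P Q"
  shows "\<exists>X :: complex \<Rightarrow> real ^ 4. \<forall>z\<in>S.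
    (X has_derivative (\<lambda>h. \<chi> k. Re (2 * weierstrass_Xz g P Q z $ k * h))) (at z)"
proof -
  have "\<exists>x :: complex \<Rightarrow> real. \<forall>z\<in>S.
      (x has_derivative (\<lambda>h. Re (2 * weierstrass_Xz g P Q z $ k * h))) (at z)" for k
  proof -
    define \<phi> where "\<phi> z = weierstrass_Xz g P Q z $ k * 2" for z
    have Xk: "C1_on S (\<lambda>z. weierstrass_Xz g P Q z $ k)"
      by (rule C1_on_weierstrass_Xz_nth[OF S(1) W])
    have "C1_on S \<phi>"
      unfolding \<phi>_def using Xk holomorphic_on_imp_C1_on[OF S(1) holomorphic_on_const]
      by (rule C1_on_mult)
    moreover have "Dzb \<phi> z \<in> \<real>" if z: "z \<in> S" for z
    proof -
      have "Dzb \<phi> z = Dzb (Dz (cfun Q)) z * Gvec (g z) $ k * 2"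
        unfolding \<phi>_def Dzb_weierstrass_Xz_nth[OF S(1) z W, symmetric]
        using Xk z unfolding C1_on_def by (intro Dzb_mult_holomorphic[OF _ DERIV_const]) auto
      moreover have "C2_on S Q" using W unfolding weierstrass_first_kind_def by blast
      then have "Dzb (Dz (cfun Q)) z \<in> \<real>" by (simp add: Dzb_Dz_cfun[OF S(1) z])
      ultimately show ?thesis using Gvec_nth_real by auto
    qed
    ultimately obtain x :: "complex \<Rightarrow> real"
      where "\<forall>z\<in>S. (x has_derivative (\<lambda>h. Re (\<phi> z * h))) (at z)"
      using exact_closed_forms_simply_connected[OF S] unfolding exact_closed_forms_def by blast
    then show ?thesis unfolding \<phi>_def by (auto simp: ac_simps)
  qed
  then have "\<forall>k. \<exists>x :: complex \<Rightarrow> real. \<forall>z\<in>S.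
      (x has_derivative (\<lambda>h. Re (2 * weierstrass_Xz g P Q z $ k * h))) (at z)" ..
  from choice[OF this] obtain x :: "4 \<Rightarrow> complex \<Rightarrow> real" where
    x: "\<And>k z. z \<in> S \<Longrightarrow> (x k has_derivative (\<lambda>h. Re (2 * weierstrass_Xz g P Q z $ k * h))) (at z)"
    by blast
  have "((\<lambda>w. \<chi> k. x k w) has_derivative (\<lambda>h. \<chi> k. Re (2 * weierstrass_Xz g P Q z $ k * h))) (at z)"
    if "z \<in> S" for z
    using x[OF that] by (rule has_derivative_vec_lambda)
  then show ?thesis by blast
qed

locale weierstrass_representation =
  fixes \<Omega> :: "complex set" and g :: "complex \<Rightarrow> complex" and P Q :: "complex \<Rightarrow> real"
    and X :: "complex \<Rightarrow> real ^ 4"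
  assumes open_domain: "open \<Omega>" and connected_domain: "connected \<Omega>"
    and data: "weierstrass_first_kind \<Omega> g P Q"
    and X_has_derivative: "\<And>z. z \<in> \<Omega> \<Longrightarrow>
      (X has_derivative (\<lambda>h. \<chi> k. Re (2 * weierstrass_Xz g P Q z $ k * h))) (at z)"
begin

lemma g_nonzero: "z \<in> \<Omega> \<Longrightarrow> g z \<noteq> 0"
  using data unfolding weierstrass_first_kind_def by blast

lemma DzV_X: "z \<in> \<Omega> \<Longrightarrow> DzV (\<lambda>w. cvec (X w)) z = weierstrass_Xz g P Q z"
  by (rule DzV_cvec_eqI[OF X_has_derivative])

lemma X_unique:
  assumes "\<And>z. z \<in> \<Omega> \<Longrightarrow> Y differentiable (at z) \<and> DzV (\<lambda>w. cvec (Y w)) z = weierstrass_Xz g P Q z"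
  shows "\<exists>c. \<forall>z\<in>\<Omega>. Y z = X z + c"
  using open_domain connected_domain X_has_derivative
proof (rule eq_plus_const_of_same_derivative)
  show "(Y has_derivative (\<lambda>h. \<chi> k. Re (2 * weierstrass_Xz g P Q z $ k * h))) (at z)"
    if "z \<in> \<Omega>" for z
    using has_derivative_DzV[of Y z] assms[OF that] by simp
qed

lemma DzbV_DzV_X:
  assumes z: "z \<in> \<Omega>"
  shows "DzbV (DzV (\<lambda>w. cvec (X w))) z = Dzb (Dz (cfun Q)) z *s Gvec (g z)"
proof -
  have "DzbV (DzV (\<lambda>w. cvec (X w))) z = DzbV (weierstrass_Xz g P Q) z"
    using DzV_X by (rule DzbV_cong[OF open_domain z])
  also have "\<dots> = (\<chi> k. Dzb (\<lambda>w. weierstrass_Xz g P Q w $ k) z)"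
    using C1_on_weierstrass_Xz_nth[OF open_domain data] z unfolding C1_on_def
    by (intro DzbV_eq_Dzb) blast
  also have "\<dots> = Dzb (Dz (cfun Q)) z *s Gvec (g z)"
    by (simp add: vec_eq_iff Dzb_weierstrass_Xz_nth[OF open_domain z data])
  finally show ?thesis .
qed

lemma X_light_cone_coordinates: "\<exists>c3 c4. \<forall>z\<in>\<Omega>. X z $ 3 = P z - Q z + c3 \<and> X z $ 4 = P z + Q z + c4"
proof -
  have "P differentiable (at z)" "Q differentiable (at z)" if "z \<in> \<Omega>" for z
    using data that unfolding weierstrass_first_kind_def C2_on_def C1_on_def by blast+
  note dP = has_derivative_Dz_cfun[OF this(1)] and dQ = has_derivative_Dz_cfun[OF this(2)]
  have dX: "((\<lambda>w. X w $ k) has_derivative (\<lambda>h. Re (2 * weierstrass_Xz g P Q z $ k * h))) (at z)"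
    if "z \<in> \<Omega>" for z k
    using bounded_linear.has_derivative[OF bounded_linear_vec_nth X_has_derivative[OF that], of k]
    by simp
  have "\<exists>c. \<forall>z\<in>\<Omega>. X z $ 3 = (P z - Q z) + c"
    using open_domain connected_domain _ dX
  proof (rule eq_plus_const_of_same_derivative)
    show "((\<lambda>w. P w - Q w) has_derivative (\<lambda>h. Re (2 * weierstrass_Xz g P Q z $ 3 * h))) (at z)"
      if "z \<in> \<Omega>" for z
      using has_derivative_diff[OF dP[OF that] dQ[OF that]]
      by (simp add: weierstrass_Xz_nth Pvec_def Qvec_def algebra_simps)
  qed
  moreover have "\<exists>c. \<forall>z\<in>\<Omega>. X z $ 4 = (P z + Q z) + c"
    using open_domain connected_domain _ dX
  proof (rule eq_plus_const_of_same_derivative)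
    show "((\<lambda>w. P w + Q w) has_derivative (\<lambda>h. Re (2 * weierstrass_Xz g P Q z $ 4 * h))) (at z)"
      if "z \<in> \<Omega>" for z
      using has_derivative_add[OF dP[OF that] dQ[OF that]]
      by (simp add: weierstrass_Xz_nth Pvec_def Qvec_def algebra_simps)
  qed
  ultimately show ?thesis by blast
qed

lemma lor_DzV_X_Gvec: "z \<in> \<Omega> \<Longrightarrow> lor (DzV (\<lambda>w. cvec (X w)) z) (Gvec (g z)) = 0"
  unfolding DzV_X weierstrass_Xz_def by (rule lor_Xz_Gvec[OF g_nonzero])

lemma X_differentiable: "z \<in> \<Omega> \<Longrightarrow> X differentiable (at z)"
  using X_has_derivative unfolding differentiable_def by blast

lemma Lam_X:
  assumes "z \<in> \<Omega>"
  shows "Lam X z = complex_of_real (4 / (cmod (g z))\<^sup>2 *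
    (cmod (Dz (cfun P) z - complex_of_real ((cmod (g z))\<^sup>2) * Dz (cfun Q) z))\<^sup>2)"
  unfolding Lam_def DzV_X[OF assms] weierstrass_Xz_def
  by (rule lor_Xz_cconj_Xz[OF g_nonzero[OF assms]])

lemma conformal_spacelike_immersion_X: "conformal_spacelike_immersion \<Omega> X"
  unfolding conformal_spacelike_immersion_def
proof (intro ballI conjI)
  fix z assume z: "z \<in> \<Omega>"
  show "X differentiable (at z)" by (rule X_differentiable[OF z])
  show "lor (DzV (\<lambda>w. cvec (X w)) z) (DzV (\<lambda>w. cvec (X w)) z) = 0"
    unfolding DzV_X[OF z] weierstrass_Xz_def by (rule lor_Xz_Xz[OF g_nonzero[OF z]])
  show "Im (Lam X z) = 0" unfolding Lam_X[OF z] by simp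
  have "Dz (cfun P) z - complex_of_real ((cmod (g z))\<^sup>2) * Dz (cfun Q) z \<noteq> 0"
    using data z unfolding weierstrass_first_kind_def by blast
  then show "Re (Lam X z) > 0"
    unfolding Lam_X[OF z] using g_nonzero[OF z] by simp
qed

lemma marginally_trapped_X: "marginally_trapped \<Omega> X"
  unfolding marginally_trapped_def meanH_def
  by (simp add: DzbV_DzV_X vector_smult_assoc lor_scale_left lor_scale_right lor_Gvec_Gvec)

end

theorem mainTheorem5:
  fixes \<Omega> :: "complex set" and g :: "complex \<Rightarrow> complex" and P Q :: "complex \<Rightarrow> real"
  assumes "open \<Omega>" and "connected \<Omega>" and "simply_connected \<Omega>"
    and "weierstrass_first_kind \<Omega> g P Q"
  shows "\<exists>X :: complex \<Rightarrow> real ^ 4.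
     (\<forall>z\<in>\<Omega>. X differentiable (at z) \<and>
        DzV (\<lambda>w. cvec (X w)) z = Dz (cfun P) z *s Pvec (g z) + Dz (cfun Q) z *s Qvec (g z))
   \<and> (\<forall>Y :: complex \<Rightarrow> real ^ 4.
        (\<forall>z\<in>\<Omega>. Y differentiable (at z) \<and>
           DzV (\<lambda>w. cvec (Y w)) z = Dz (cfun P) z *s Pvec (g z) + Dz (cfun Q) z *s Qvec (g z))
        \<longrightarrow> (\<exists>c. \<forall>z\<in>\<Omega>. Y z = X z + c))
   \<and> (\<forall>z\<in>\<Omega>. DzbV (DzV (\<lambda>w. cvec (X w))) z = Dzb (Dz (cfun Q)) z *s Gvec (g z))
   \<and> (\<exists>c3 c4. \<forall>z\<in>\<Omega>. X z $ 3 = P z - Q z + c3 \<and> X z $ 4 = P z + Q z + c4)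
   \<and> (\<forall>z\<in>\<Omega>. lor (Gvec (g z)) (Gvec (g z)) = 0 \<and>
              lor (DzV (\<lambda>w. cvec (X w)) z) (Gvec (g z)) = 0)
   \<and> conformal_spacelike_immersion \<Omega> X
   \<and> (\<forall>z\<in>\<Omega>. Lam X z = complex_of_real (4 / (cmod (g z))\<^sup>2 *
          (cmod (Dz (cfun P) z - complex_of_real ((cmod (g z))\<^sup>2) * Dz (cfun Q) z))\<^sup>2))
   \<and> marginally_trapped \<Omega> X"
proof -
  obtain X where "\<forall>z\<in>\<Omega>. (X has_derivative (\<lambda>h. \<chi> k. Re (2 * weierstrass_Xz g P Q z $ k * h))) (at z)"
    using weierstrass_potential_exists[OF assms(1,3,4)] by blast
  then interpret weierstrass_representation \<Omega> g P Q X
    using assms by unfold_locales auto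
  show ?thesis
    unfolding weierstrass_Xz_def[symmetric]
  proof (intro exI[of _ X] conjI)
    show "\<forall>z\<in>\<Omega>. X differentiable (at z) \<and> DzV (\<lambda>w. cvec (X w)) z = weierstrass_Xz g P Q z"
      using X_differentiable DzV_X by blast
    show "\<forall>Y. (\<forall>z\<in>\<Omega>. Y differentiable (at z) \<and> DzV (\<lambda>w. cvec (Y w)) z = weierstrass_Xz g P Q z)
        \<longrightarrow> (\<exists>c. \<forall>z\<in>\<Omega>. Y z = X z + c)"
      using X_unique by blast
    show "\<forall>z\<in>\<Omega>. lor (Gvec (g z)) (Gvec (g z)) = 0 \<and> lor (DzV (\<lambda>w. cvec (X w)) z) (Gvec (g z)) = 0"
      using lor_Gvec_Gvec lor_DzV_X_Gvec by blast
  qed (use DzbV_DzV_X X_light_cone_coordinates conformal_spacelike_immersion_X Lam_X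
      marginally_trapped_X in auto)
qed

end
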